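(* Let $G=(V,E)$ be a directed graph on $n$ nodes in which every node has a self-loop, let $P$ be an $n\times n$ right stochastic matrix supported on the edges of $G$, let $D$ be diagonal with entries $D_{uu}=p_{uu'}\in[0,1]$, $\tilde P=(\mathbf I_n-D)P$, $p^{(t)}_{uv}=(P^t)_{uv}$, $\tilde p^{(t)}_{uv}=(\tilde P^t)_{uv}$. For $u\neq w$ define $\pi_{uw}=\sum_{t\ge1}\tilde p^{(t)}_{uw}\,p_{ww'}$. Then for all $u\neq w$ in $V$, $$(1-p_{uu'})\Big(\sum_{t\ge1}\big(\min_{x\in V}(1-p_{xx'})\big)^{t-1}p^{(t)}_{uw}\Big)p_{ww'}\ \le\ \pi_{uw}\ \le\ (1-p_{uu'})\Big(\sum_{t\ge1}\big(\max_{x\in V}(1-p_{xx'})\big)^{t-1}p^{(t)}_{uw}\Big)p_{ww'}.$$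
   Context: $p_{uu'}$ is the probability that a random walker at $u$ is absorbed at an auxiliary absorbing node $u'$; $\pi_{uw}$ is the probability that a walker started at $u$ is eventually absorbed at (the auxiliary node of) $w$. *)

theory Defs
  imports "HOL-Analysis.Analysis"
begin

primrec mat_pow :: "('v::finite \<Rightarrow> 'v \<Rightarrow> real) \<Rightarrow> nat \<Rightarrow> 'v \<Rightarrow> 'v \<Rightarrow> real" where
  "mat_pow A 0 = (\<lambda>u v. if u = v then 1 else 0)"
| "mat_pow A (Suc k) = (\<lambda>u v. \<Sum>x\<in>UNIV. mat_pow A k u x * A x v)"

definition right_stochastic :: "('v::finite \<Rightarrow> 'v \<Rightarrow> real) \<Rightarrow> bool" where
  "right_stochastic P \<longleftrightarrow> (\<forall>u v. P u v \<ge> 0) \<and> (\<forall>u. (\<Sum>v\<in>UNIV. P u v) = 1)"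

text \<open>tilde P = (I - D) P, where D = diag(d), d u = p_{uu'}.\<close>
definition tilde_P :: "('v::finite \<Rightarrow> real) \<Rightarrow> ('v \<Rightarrow> 'v \<Rightarrow> real) \<Rightarrow> 'v \<Rightarrow> 'v \<Rightarrow> real" where
  "tilde_P d P = (\<lambda>u v. (1 - d u) * P u v)"

definition absorb_prob :: "('v::finite \<Rightarrow> real) \<Rightarrow> ('v \<Rightarrow> 'v \<Rightarrow> real) \<Rightarrow> 'v \<Rightarrow> 'v \<Rightarrow> ennreal" where
  "absorb_prob d P u w = (\<Sum>t. ennreal (mat_pow (tilde_P d P) (Suc t) u w * d w))"

end

theory Submission
  imports Defs
begin

text \<open>A walker started at \<open>u\<close> survives its first step with probability exactly \<open>1 - d u\<close>
  and each later step with a probability between the minimum and the maximum of \<open>1 - d\<close>.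
  Accordingly, with \<open>m\<close> and \<open>M\<close> these extrema, peeling off the first factor of a power of
  \<open>tilde_P d P\<close> and comparing the remaining power entrywise with the powers of the rescaled
  matrices \<open>m P \<le> tilde_P d P \<le> M P\<close> bounds every term of the series defining the absorption
  probability.\<close>

lemma mat_pow_nonneg:
  assumes "\<forall>u v. 0 \<le> A u v"
  shows "0 \<le> mat_pow A k u v"
  using assms by (induction k arbitrary: v) (auto intro!: sum_nonneg)

lemma mat_pow_Suc_left:
  "mat_pow A (Suc k) u v = (\<Sum>y\<in>UNIV. A u y * mat_pow A k y v)"
proof (induction k arbitrary: v)
  case 0
  show ?case by (simp add: if_distrib if_distribR sum.If_cases)
next
  case (Suc k)
  have "mat_pow A (Suc (Suc k)) u v = (\<Sum>x\<in>UNIV. (\<Sum>y\<in>UNIV. A u y * mat_pow A k y x) * A x v)"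
    using Suc.IH by simp
  also have "\<dots> = (\<Sum>x\<in>UNIV. \<Sum>y\<in>UNIV. A u y * (mat_pow A k y x * A x v))"
    by (simp add: sum_distrib_right mult.assoc)
  also have "\<dots> = (\<Sum>y\<in>UNIV. A u y * (\<Sum>x\<in>UNIV. mat_pow A k y x * A x v))"
    by (subst sum.swap) (simp add: sum_distrib_left)
  finally show ?case by simp
qed

lemma mat_pow_scale:
  "mat_pow (\<lambda>u v. c * A u v) k u v = c ^ k * mat_pow A k u v"
  by (induction k arbitrary: v) (simp_all add: sum_distrib_left algebra_simps)

lemma mat_pow_mono:
  assumes "\<forall>u v. 0 \<le> A u v" and "\<forall>u v. A u v \<le> B u v"
  shows "mat_pow A k u v \<le> mat_pow B k u v"
proof (induction k arbitrary: v)
  case (Suc k)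
  have "\<forall>u v. 0 \<le> B u v"
    using assms order_trans by blast
  then show ?case
    using Suc.IH assms by (auto intro!: sum_mono mult_mono mat_pow_nonneg)
qed simp

lemma mat_pow_tilde_P_Suc:
  "mat_pow (tilde_P d P) (Suc k) u v = (1 - d u) * (\<Sum>y\<in>UNIV. P u y * mat_pow (tilde_P d P) k y v)"
  unfolding mat_pow_Suc_left by (simp add: tilde_P_def sum_distrib_left mult.assoc)

lemma mat_pow_tilde_P_lower:
  assumes P_nonneg: "\<forall>u v. 0 \<le> P u v"
    and d_le: "\<forall>x. d x \<le> 1"
    and m_nonneg: "0 \<le> m" and m_le: "\<forall>x. m \<le> 1 - d x"
  shows "(1 - d u) * m ^ k * mat_pow P (Suc k) u v \<le> mat_pow (tilde_P d P) (Suc k) u v"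
proof -
  have "m ^ k * mat_pow P k y v \<le> mat_pow (tilde_P d P) k y v" for y
    unfolding mat_pow_scale[symmetric]
    using P_nonneg m_nonneg m_le
    by (intro mat_pow_mono) (auto simp: tilde_P_def intro: mult_right_mono)
  then have "(\<Sum>y\<in>UNIV. P u y * (m ^ k * mat_pow P k y v))
      \<le> (\<Sum>y\<in>UNIV. P u y * mat_pow (tilde_P d P) k y v)"
    using P_nonneg by (intro sum_mono mult_left_mono) auto
  then have "(1 - d u) * (\<Sum>y\<in>UNIV. P u y * (m ^ k * mat_pow P k y v))
      \<le> mat_pow (tilde_P d P) (Suc k) u v"
    unfolding mat_pow_tilde_P_Suc using d_le by (intro mult_left_mono) auto
  then show ?thesis
    unfolding mat_pow_Suc_left[of P] by (simp add: sum_distrib_left algebra_simps)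
qed

lemma mat_pow_tilde_P_upper:
  assumes P_nonneg: "\<forall>u v. 0 \<le> P u v"
    and d_range: "\<forall>x. 0 \<le> d x \<and> d x \<le> 1"
    and le_M: "\<forall>x. 1 - d x \<le> M"
  shows "mat_pow (tilde_P d P) (Suc k) u v \<le> (1 - d u) * M ^ k * mat_pow P (Suc k) u v"
proof -
  have "mat_pow (tilde_P d P) k y v \<le> M ^ k * mat_pow P k y v" for y
    unfolding mat_pow_scale[symmetric]
    using P_nonneg d_range le_M
    by (intro mat_pow_mono) (auto simp: tilde_P_def intro: mult_right_mono)
  then have "(\<Sum>y\<in>UNIV. P u y * mat_pow (tilde_P d P) k y v)
      \<le> (\<Sum>y\<in>UNIV. P u y * (M ^ k * mat_pow P k y v))"
    using P_nonneg by (intro sum_mono mult_left_mono) auto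
  then have "mat_pow (tilde_P d P) (Suc k) u v
      \<le> (1 - d u) * (\<Sum>y\<in>UNIV. P u y * (M ^ k * mat_pow P k y v))"
    unfolding mat_pow_tilde_P_Suc using d_range by (intro mult_left_mono) auto
  then show ?thesis
    unfolding mat_pow_Suc_left[of P] by (simp add: sum_distrib_left algebra_simps)
qed

lemma ennreal_mult_suminf_mult:
  assumes "0 \<le> a" and "0 \<le> b" and "\<forall>t. 0 \<le> f t"
  shows "ennreal a * (\<Sum>t. ennreal (f t)) * ennreal b = (\<Sum>t. ennreal (a * f t * b))"
proof -
  have "ennreal (a * f t * b) = ennreal a * ennreal (f t) * ennreal b" for t
    using assms by (simp add: ennreal_mult)
  then show ?thesis
    by (simp only: ennreal_suminf_cmult ennreal_suminf_multc)
qed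

lemma absorb_prob_bounds:
  assumes P_nonneg: "\<forall>u v. 0 \<le> P u v"
    and d_range: "\<forall>x. 0 \<le> d x \<and> d x \<le> 1"
    and m_nonneg: "0 \<le> m" and m_le: "\<forall>x. m \<le> 1 - d x" and le_M: "\<forall>x. 1 - d x \<le> M"
  shows "ennreal (1 - d u) * (\<Sum>t. ennreal (m ^ t * mat_pow P (Suc t) u w)) * ennreal (d w)
           \<le> absorb_prob d P u w
       \<and> absorb_prob d P u w
           \<le> ennreal (1 - d u) * (\<Sum>t. ennreal (M ^ t * mat_pow P (Suc t) u w)) * ennreal (d w)"
proof -
  have M_nonneg: "0 \<le> M"
    using le_M d_range by (meson diff_ge_0_iff_ge order_trans)
  have d_le: "\<forall>x. d x \<le> 1" and survival_u_nonneg: "0 \<le> 1 - d u" and d_w_nonneg: "0 \<le> d w"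
    using d_range by auto
  have term_lower: "(1 - d u) * (m ^ t * mat_pow P (Suc t) u w) * d w
      \<le> mat_pow (tilde_P d P) (Suc t) u w * d w" for t
    using mult_right_mono[OF mat_pow_tilde_P_lower[OF P_nonneg d_le m_nonneg m_le] d_w_nonneg]
    by (simp only: mult.assoc)
  have term_upper: "mat_pow (tilde_P d P) (Suc t) u w * d w
      \<le> (1 - d u) * (M ^ t * mat_pow P (Suc t) u w) * d w" for t
    using mult_right_mono[OF mat_pow_tilde_P_upper[OF P_nonneg d_range le_M] d_w_nonneg]
    by (simp only: mult.assoc)
  have "(\<Sum>t. ennreal ((1 - d u) * (m ^ t * mat_pow P (Suc t) u w) * d w)) \<le> absorb_prob d P u w"
    unfolding absorb_prob_def using term_lower by (intro suminf_le summableI ennreal_leI)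
  moreover have "absorb_prob d P u w \<le> (\<Sum>t. ennreal ((1 - d u) * (M ^ t * mat_pow P (Suc t) u w) * d w))"
    unfolding absorb_prob_def using term_upper by (intro suminf_le summableI ennreal_leI)
  moreover have "ennreal (1 - d u) * (\<Sum>t. ennreal (c ^ t * mat_pow P (Suc t) u w)) * ennreal (d w)
      = (\<Sum>t. ennreal ((1 - d u) * (c ^ t * mat_pow P (Suc t) u w) * d w))" if "0 \<le> c" for c
    using survival_u_nonneg d_w_nonneg \<open>0 \<le> c\<close> mat_pow_nonneg[OF P_nonneg]
    by (intro ennreal_mult_suminf_mult) (auto simp del: mat_pow.simps)
  ultimately show ?thesis
    using m_nonneg M_nonneg by simp
qed

theorem lemma3:
  fixes E :: "('v::finite \<times> 'v) set"
    and P :: "'v \<Rightarrow> 'v \<Rightarrow> real"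
    and d :: "'v \<Rightarrow> real"
  assumes self_loops: "\<forall>u. (u, u) \<in> E"
    and stoch: "right_stochastic P"
    and support: "\<forall>u v. P u v \<noteq> 0 \<longrightarrow> (u, v) \<in> E"
    and d_range: "\<forall>u. 0 \<le> d u \<and> d u \<le> 1"
    and uw: "u \<noteq> w"
  shows "ennreal (1 - d u)
           * (\<Sum>t. ennreal ((Min (range (\<lambda>x. 1 - d x))) ^ t * mat_pow P (Suc t) u w))
           * ennreal (d w)
         \<le> absorb_prob d P u w
       \<and> absorb_prob d P u w
         \<le> ennreal (1 - d u)
           * (\<Sum>t. ennreal ((Max (range (\<lambda>x. 1 - d x))) ^ t * mat_pow P (Suc t) u w))
           * ennreal (d w)"
proof -
  have P_nonneg: "\<forall>u v. 0 \<le> P u v"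
    using stoch by (simp add: right_stochastic_def)
  have "0 \<le> Min (range (\<lambda>x. 1 - d x))"
    using d_range by auto
  then show ?thesis
    using P_nonneg d_range by (intro absorb_prob_bounds) auto
qed

end
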